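(* Assume $d\geq 3$ and $a,b>0$. With $c=c(d)>0$ the constant such that $P_N(\phi_x\in[0,a]\ \forall x\in A)\geq[c(\frac12\wedge a)]^{|A|}$ for all $A\subset\Lambda_N$, one has for every $N$ \[ \tilde P_{N,a,b}(\Omega_N^+)\ \geq\ \frac{Z_N}{\tilde Z_{N,a,b}}\sum_{A\subset\Lambda_N}\exp(J'|A|)\,P_{\Lambda_N\setminus A}\big(\phi_x\geq 0\ \forall x\in\Lambda_N\setminus A\big), \] where $J'=\log(e^b-1)+\log c+\log(\tfrac12\wedge a)$.
   Context: For a finite set $B\subset\mathbb{Z}^d$ with outer boundary $\partial B$ (points of $\mathbb{Z}^d\setminus B$ at distance $1$ from $B$) and $\phi\in\mathbb{R}^{\mathbb{Z}^d}$, let $H_B(\phi)=\frac{1}{8d}\sum_{x,y\in B\cup\partial B,\ |x-y|=1}(\phi_x-\phi_y)^2$ (sum over ordered pairs), and let $P_B(d\phi)=Z_B^{-1}e^{-H_B(\phi)}\prod_{x\in B}d\phi_x\,\delta_0(d\phi_{B^c})$ be the discrete Gaussian free field on $B$ with zero boundary condition, with normalizing constant $Z_B=\int e^{-H_B(\phi)}\prod_{x\in B}d\phi_x$. Let $\Lambda_N=\{-\lfloor N/2\rfloor,\dots,\lfloor N/2\rfloor\}^d$, $P_N=P_{\Lambda_N}$, $Z_N=Z_{\Lambda_N}$, $H=H_{\Lambda_N}$. Define \[ \tilde P_{N,a,b}(d\phi)=\frac{1}{\tilde Z_{N,a,b}}\exp\Big(-H(\phi)+b\sum_{x\in\Lambda_N}\mathbf{1}_{\{\phi_x\in[0,a]\}}\Big)\prod_{x\in\Lambda_N}d\phi_x\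 \delta_0(d\phi_{\Lambda_N^c}), \] with $\tilde Z_{N,a,b}$ its normalizing constant, and $\Omega_N^+=\{\phi_x\geq0\ \forall x\in\Lambda_N\}$. $x\wedge y=\min(x,y)$. *)

theory Defs
  imports "HOL-Analysis.Analysis"
begin

text \<open>Sites of Z^d are vectors int^'d, with d = CARD('d).\<close>

definition adj :: "int^'d \<Rightarrow> int^'d \<Rightarrow> bool" where
  "adj x y \<longleftrightarrow> (\<Sum>i\<in>UNIV. (x$i - y$i)^2) = 1"

definition outer_bd :: "(int^'d) set \<Rightarrow> (int^'d) set" where
  "outer_bd B = {y. y \<notin> B \<and> (\<exists>x\<in>B. adj x y)}"

definition Ham :: "(int^'d) set \<Rightarrow> (int^'d \<Rightarrow> real) \<Rightarrow> real" where
  "Ham B \<phi> = (1 / (8 * real CARD('d))) *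
     (\<Sum>p\<in>{(x,y). x \<in> B \<union> outer_bd B \<and> y \<in> B \<union> outer_bd B \<and> adj x y}.
        (\<phi> (fst p) - \<phi> (snd p))^2)"

definition zext :: "(int^'d) set \<Rightarrow> (int^'d \<Rightarrow> real) \<Rightarrow> (int^'d \<Rightarrow> real)" where
  "zext B \<omega> = (\<lambda>x. if x \<in> B then \<omega> x else 0)"

definition Zgff :: "(int^'d) set \<Rightarrow> real" where
  "Zgff B = (\<integral>\<omega>. exp (- Ham B (zext B \<omega>)) \<partial>(PiM B (\<lambda>_. lborel)))"

definition Pgff :: "(int^'d) set \<Rightarrow> (int^'d \<Rightarrow> real) set \<Rightarrow> real" where
  "Pgff B E = (\<integral>\<omega>. indicator E (zext B \<omega>) * exp (- Ham B (zext B \<omega>))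
                  \<partial>(PiM B (\<lambda>_. lborel))) / Zgff B"

definition Lam :: "nat \<Rightarrow> (int^'d) set" where
  "Lam N = {x. \<forall>i. \<bar>x$i\<bar> \<le> int N div 2}"

definition Ztil :: "nat \<Rightarrow> real \<Rightarrow> real \<Rightarrow> ('d::finite itself) \<Rightarrow> real" where
  "Ztil N a b _ = (\<integral>\<omega>. exp (- Ham (Lam N :: (int^'d) set) (zext (Lam N) \<omega>)
        + b * real (card {x \<in> (Lam N :: (int^'d) set). zext (Lam N) \<omega> x \<in> {0..a}}))
      \<partial>(PiM (Lam N :: (int^'d) set) (\<lambda>_. lborel)))"

definition Ptil :: "nat \<Rightarrow> real \<Rightarrow> real \<Rightarrow> (int^'d::finite \<Rightarrow> real) set \<Rightarrow> real" where
  "Ptil N a b E = (\<integral>\<omega>. indicator E (zext (Lam N) \<omega>) *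
        exp (- Ham (Lam N :: (int^'d) set) (zext (Lam N) \<omega>)
        + b * real (card {x \<in> (Lam N :: (int^'d) set). zext (Lam N) \<omega> x \<in> {0..a}}))
      \<partial>(PiM (Lam N :: (int^'d) set) (\<lambda>_. lborel))) / Ztil N a b TYPE('d)"

end

theory Submission
  imports Defs
begin

text \<open>Expanding \<open>exp (b * #{x \<in> \<Lambda>. \<phi> x \<in> [0,a]})\<close> as the sum over \<open>A \<subseteq> \<Lambda>\<close> of
  \<open>(exp b - 1)^|A|\<close> times the indicator of \<open>\<phi> \<in> [0,a] on A\<close> writes the numerator of
  \<open>Ptil(\<Omega>\<^sup>+)\<close> as a sum over pinned sets \<open>A\<close>. Given values \<open>\<psi> \<ge> 0\<close> on \<open>A\<close>, let \<open>h \<ge> 0\<close>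
  minimise the energy with \<open>\<psi>\<close> fixed; then \<open>H\<^sub>\<Lambda>(\<psi> on A, h + \<eta> off A) = C + H\<^sub>\<Lambda>\<^sub>-\<^sub>A(\<eta>)\<close>,
  so conditionally on \<open>\<psi>\<close> the field off \<open>A\<close> is the free field on \<open>\<Lambda> - A\<close> shifted by \<open>h \<ge> 0\<close>.
  By translation invariance of Lebesgue measure this gives
  \<open>P\<^sub>N(\<Omega>\<^sup>+, \<phi> \<in> [0,a] on A) \<ge> P\<^sub>N(\<phi> \<in> [0,a] on A) * P\<^sub>\<Lambda>\<^sub>-\<^sub>A(\<Omega>\<^sup>+)\<close>, and the hypothesis on \<open>c\<close>
  bounds the first factor.\<close>

lemma adj_abs_diff_le_1:
  assumes "adj x y"
  shows "\<bar>x$i - y$i\<bar> \<le> 1"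
proof -
  have "(x$i - y$i)^2 \<le> (\<Sum>j\<in>UNIV. (x$j - y$j)^2)"
    by (rule member_le_sum) auto
  then have "(x$i - y$i)^2 \<le> 1"
    using assms by (simp add: adj_def)
  then show ?thesis
    by (simp add: abs_square_le_1)
qed

lemma finite_box: "finite {x::int^'d. \<forall>i. \<bar>x$i\<bar> \<le> n}"
proof -
  have "{x::int^'d. \<forall>i. \<bar>x$i\<bar> \<le> n} \<subseteq> vec_lambda ` PiE UNIV (\<lambda>_. {-n..n})"
  proof
    fix x :: "int^'d"
    assume "x \<in> {x. \<forall>i. \<bar>x$i\<bar> \<le> n}"
    then have "(\<lambda>i. x$i) \<in> PiE UNIV (\<lambda>_. {-n..n})"
      by (auto simp: abs_le_iff) (metis minus_le_iff)
    then show "x \<in> vec_lambda ` PiE UNIV (\<lambda>_. {-n..n})"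
      by (metis image_eqI vec_lambda_eta)
  qed
  moreover have "finite (PiE (UNIV::'d set) (\<lambda>_. {-n..n}))"
    by (rule finite_PiE) auto
  ultimately show ?thesis
    using finite_subset by blast
qed

lemma finite_Lam: "finite (Lam N :: (int^'d) set)"
  unfolding Lam_def by (rule finite_box)

lemma finite_outer_bd:
  fixes B :: "(int^'d) set"
  assumes "finite B"
  shows "finite (outer_bd B)"
proof -
  have "outer_bd B \<subseteq> (\<Union>x\<in>B. (+) x ` {v. \<forall>i. \<bar>v$i\<bar> \<le> 1})"
  proof
    fix y
    assume "y \<in> outer_bd B"
    then obtain x where "x \<in> B" "adj x y"
      by (auto simp: outer_bd_def)
    then have "y - x \<in> {v. \<forall>i. \<bar>v$i\<bar> \<le> 1}"
      using adj_abs_diff_le_1[of x y] by (simp add: abs_minus_commute)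
    then show "y \<in> (\<Union>x\<in>B. (+) x ` {v. \<forall>i. \<bar>v$i\<bar> \<le> 1})"
      using \<open>x \<in> B\<close> by (auto intro!: bexI[of _ x] image_eqI[of _ _ "y - x"])
  qed
  moreover have "finite (\<Union>x\<in>B. (+) x ` {v::int^'d. \<forall>i. \<bar>v$i\<bar> \<le> 1})"
    using assms finite_box by blast
  ultimately show ?thesis
    by (rule finite_subset)
qed

section \<open>Dirichlet energy\<close>

definition edges :: "(int^'d) set \<Rightarrow> ((int^'d) \<times> (int^'d)) set" where
  "edges B = {(x,y). x \<in> B \<union> outer_bd B \<and> y \<in> B \<union> outer_bd B \<and> adj x y}"

definition dirichlet :: "(int^'d) set \<Rightarrow> (int^'d \<Rightarrow> real) \<Rightarrow> real" where
  "dirichlet B f = (\<Sum>p\<in>edges B. (f (fst p) - f (snd p))^2)"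

definition dirichlet_inner :: "(int^'d) set \<Rightarrow> (int^'d \<Rightarrow> real) \<Rightarrow> (int^'d \<Rightarrow> real) \<Rightarrow> real" where
  "dirichlet_inner B f g = (\<Sum>p\<in>edges B. (f (fst p) - f (snd p)) * (g (fst p) - g (snd p)))"

lemma Ham_eq_dirichlet: "Ham B f = dirichlet B f / (8 * real CARD('d))"
  for B :: "(int^'d) set"
  unfolding Ham_def dirichlet_def edges_def by simp

lemma finite_edges:
  assumes "finite B"
  shows "finite (edges B)"
proof -
  have "edges B \<subseteq> (B \<union> outer_bd B) \<times> (B \<union> outer_bd B)"
    by (auto simp: edges_def)
  then show ?thesis
    using assms finite_outer_bd by (blast intro: finite_subset)
qed

lemma dirichlet_eq_if_vanishing_outside:
  fixes B L :: "(int^'d) set"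
  assumes "B \<subseteq> L" and "finite L" and f0: "\<And>x. x \<notin> B \<Longrightarrow> f x = 0"
  shows "dirichlet B f = dirichlet L f"
  unfolding dirichlet_def
proof (rule sum.mono_neutral_left)
  show "finite (edges L)"
    using assms finite_edges by blast
  show "edges B \<subseteq> edges L"
    using \<open>B \<subseteq> L\<close> by (auto simp: edges_def outer_bd_def)
  show "\<forall>p\<in>edges L - edges B. (f (fst p) - f (snd p))^2 = 0"
  proof
    fix p
    assume p: "p \<in> edges L - edges B"
    obtain x y where "p = (x, y)" and "adj x y"
      using p by (auto simp: edges_def)
    moreover have "adj y x"
      using \<open>adj x y\<close> by (simp add: adj_def power2_commute)
    ultimately have "x \<notin> B \<and> y \<notin> B"
      using p by (auto simp: edges_def outer_bd_def)
    then show "(f (fst p) - f (snd p))^2 = 0"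
      using f0 \<open>p = (x, y)\<close> by simp
  qed
qed

lemma dirichlet_add_scaled:
  "dirichlet L (\<lambda>x. f x + t * g x) = dirichlet L f + 2 * t * dirichlet_inner L f g + t^2 * dirichlet L g"
proof -
  have "dirichlet L (\<lambda>x. f x + t * g x) = (\<Sum>p\<in>edges L. (f (fst p) - f (snd p))^2
      + 2 * t * ((f (fst p) - f (snd p)) * (g (fst p) - g (snd p))) + t^2 * (g (fst p) - g (snd p))^2)"
    unfolding dirichlet_def by (rule sum.cong) (simp_all add: power2_eq_square algebra_simps)
  then show ?thesis
    unfolding dirichlet_def dirichlet_inner_def by (simp add: sum.distrib sum_distrib_left)
qed

lemma dirichlet_clamp_le: "dirichlet L (\<lambda>x. max 0 (min M (f x))) \<le> dirichlet L f"
  unfolding dirichlet_def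
proof (rule sum_mono)
  fix p
  have "\<bar>max 0 (min M (f (fst p))) - max 0 (min M (f (snd p)))\<bar> \<le> \<bar>f (fst p) - f (snd p)\<bar>"
    by (simp add: abs_if max_def min_def)
  then show "(max 0 (min M (f (fst p))) - max 0 (min M (f (snd p))))^2 \<le> (f (fst p) - f (snd p))^2"
    by (metis abs_ge_zero power2_abs power_mono)
qed

definition glue :: "'a set \<Rightarrow> 'a set \<Rightarrow> ('a \<Rightarrow> real) \<Rightarrow> ('a \<Rightarrow> real) \<Rightarrow> 'a \<Rightarrow> real" where
  "glue A B \<psi> \<phi> = (\<lambda>x. if x \<in> A then \<psi> x else if x \<in> B then \<phi> x else 0)"

lemma continuous_on_dirichlet_glue: "continuous_on UNIV (\<lambda>\<phi>. dirichlet L (glue A B \<psi> \<phi>))"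
proof -
  have glue: "continuous_on UNIV (\<lambda>\<phi>. glue A B \<psi> \<phi> x)" for x
    unfolding glue_def by (cases "x \<in> A"; cases "x \<in> B") auto
  show ?thesis
    unfolding dirichlet_def by (intro continuous_intros glue)
qed

text \<open>A minimiser can be sought among fields with values in \<open>[0, max \<psi>]\<close>, a compact set, because
  clamping to that interval does not increase the energy; this also makes it nonnegative.\<close>

lemma exists_nonneg_dirichlet_minimiser:
  fixes A B :: "(int^'d) set"
  assumes "finite A" and \<psi>: "\<forall>x\<in>A. 0 \<le> \<psi> x"
  shows "\<exists>h. (\<forall>x. 0 \<le> h x) \<and> (\<forall>\<phi>. dirichlet L (glue A B \<psi> h) \<le> dirichlet L (glue A B \<psi> \<phi>))"
proof -
  define M where "M = Max (insert 0 (\<psi> ` A))"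
  have "0 \<le> M" and \<psi>M: "\<And>x. x \<in> A \<Longrightarrow> \<psi> x \<le> M"
    unfolding M_def using \<open>finite A\<close> by auto
  define K where "K = PiE (UNIV::(int^'d) set) (\<lambda>x. if x \<in> B then {0..M} else {0::real})"
  have "compactin (product_topology (\<lambda>_. euclidean) UNIV) K"
    unfolding K_def compactin_PiE by auto
  then have "compact K"
    by (simp add: euclidean_product_topology)
  moreover have "K \<noteq> {}"
    unfolding K_def using \<open>0 \<le> M\<close> by (auto simp: PiE_eq_empty_iff)
  ultimately obtain h where "h \<in> K" and hmin: "\<forall>k\<in>K. dirichlet L (glue A B \<psi> h) \<le> dirichlet L (glue A B \<psi> k)"
    using continuous_attains_inf continuous_on_subset[OF continuous_on_dirichlet_glue] by (metis subset_UNIV)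
  have "dirichlet L (glue A B \<psi> h) \<le> dirichlet L (glue A B \<psi> \<phi>)" for \<phi>
  proof -
    define k where "k = (\<lambda>x. if x \<in> B then max 0 (min M (\<phi> x)) else 0)"
    have "k \<in> K"
      unfolding k_def K_def using \<open>0 \<le> M\<close> by (auto simp: PiE_iff)
    then have "dirichlet L (glue A B \<psi> h) \<le> dirichlet L (glue A B \<psi> k)"
      using hmin by blast
    also have "glue A B \<psi> k = (\<lambda>x. max 0 (min M (glue A B \<psi> \<phi> x)))"
      using \<psi> \<psi>M \<open>0 \<le> M\<close> by (auto simp: glue_def k_def)
    also have "dirichlet L \<dots> \<le> dirichlet L (glue A B \<psi> \<phi>)"
      by (rule dirichlet_clamp_le)
    finally show ?thesis .
  qed
  moreover have "\<forall>x. 0 \<le> h x"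
    using \<open>h \<in> K\<close> unfolding K_def by (auto simp: PiE_iff split: if_splits)
  ultimately show ?thesis
    by blast
qed

lemma linear_coeff_eq_0_if_quadratic_nonneg:
  fixes l q :: real
  assumes "\<forall>t. 0 \<le> 2 * t * l + t^2 * q"
  shows "l = 0"
proof (rule ccontr)
  assume "l \<noteq> 0"
  have "0 \<le> q"
    using assms[rule_format, of 1] assms[rule_format, of "-1"] by simp
  define t where "t = - l / (q + 1)"
  have t: "t * (q + 1) = - l"
    using \<open>0 \<le> q\<close> by (simp add: t_def)
  have "(q + 1)^2 * (2 * t * l + t^2 * q) = 2 * l * (q + 1) * (t * (q + 1)) + (t * (q + 1))^2 * q"
    by (simp add: power2_eq_square algebra_simps)
  also have "\<dots> = - (l^2 * (q + 2))"
    unfolding t by (simp add: power2_eq_square algebra_simps)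
  also have "\<dots> < 0"
    using \<open>l \<noteq> 0\<close> \<open>0 \<le> q\<close> by (simp add: mult_pos_pos)
  finally show False
    using assms \<open>0 \<le> q\<close> by (metis mult_nonneg_nonneg not_le zero_le_power2)
qed

text \<open>The first-order condition at the minimiser \<open>h\<close> (its harmonicity off \<open>A\<close>) kills the
  cross term.\<close>

lemma dirichlet_glue_pythagoras:
  assumes "A \<inter> B = {}"
    and hmin: "\<forall>\<phi>. dirichlet L (glue A B \<psi> h) \<le> dirichlet L (glue A B \<psi> \<phi>)"
  shows "dirichlet L (glue A B \<psi> (\<lambda>x. \<eta> x + h x)) = dirichlet L (glue A B \<psi> h) + dirichlet L (zext B \<eta>)"
proof -
  have perturb: "glue A B \<psi> (\<lambda>x. h x + t * \<eta> x) = (\<lambda>x. glue A B \<psi> h x + t * zext B \<eta> x)" for t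
    using assms(1) by (auto simp: glue_def zext_def fun_eq_iff)
  have "\<forall>t. 0 \<le> 2 * t * dirichlet_inner L (glue A B \<psi> h) (zext B \<eta>) + t^2 * dirichlet L (zext B \<eta>)"
    using hmin[rule_format, of "\<lambda>x. h x + _ * \<eta> x"] by (simp add: perturb dirichlet_add_scaled)
  then have "dirichlet_inner L (glue A B \<psi> h) (zext B \<eta>) = 0"
    by (rule linear_coeff_eq_0_if_quadratic_nonneg)
  then show ?thesis
    using perturb[of 1] dirichlet_add_scaled[of L "glue A B \<psi> h" 1 "zext B \<eta>"]
    by (simp add: add.commute)
qed

lemma Ham_glue_split:
  fixes A B L :: "(int^'d) set"
  assumes "finite L" and AB: "A \<inter> B = {}" "A \<union> B = L" and "\<forall>x\<in>A. 0 \<le> \<psi> x"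
  obtains h C where "\<forall>x. 0 \<le> h x"
    and "\<And>\<eta>. Ham L (glue A B \<psi> (\<lambda>x. \<eta> x + h x)) = C + Ham B (zext B \<eta>)"
proof -
  have "finite A"
    using assms finite_subset by blast
  then obtain h where "\<forall>x. 0 \<le> h x"
    and hmin: "\<forall>\<phi>. dirichlet L (glue A B \<psi> h) \<le> dirichlet L (glue A B \<psi> \<phi>)"
    using exists_nonneg_dirichlet_minimiser assms(4) by blast
  have "dirichlet B (zext B \<eta>) = dirichlet L (zext B \<eta>)" for \<eta>
    using AB \<open>finite L\<close> by (intro dirichlet_eq_if_vanishing_outside) (auto simp: zext_def)
  then have "Ham L (glue A B \<psi> (\<lambda>x. \<eta> x + h x)) = Ham L (glue A B \<psi> h) + Ham B (zext B \<eta>)" for \<eta>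
    using dirichlet_glue_pythagoras[OF AB(1) hmin] by (simp add: Ham_eq_dirichlet add_divide_distrib)
  with \<open>\<forall>x. 0 \<le> h x\<close> show thesis
    using that by blast
qed

abbreviation Leb :: "'i set \<Rightarrow> ('i \<Rightarrow> real) measure" where
  "Leb B \<equiv> PiM B (\<lambda>_. lborel)"

abbreviation gibbs :: "(int^'d) set \<Rightarrow> (int^'d \<Rightarrow> real) \<Rightarrow> real" where
  "gibbs B \<omega> \<equiv> exp (- Ham B (zext B \<omega>))"

abbreviation nonneg_on :: "'a set \<Rightarrow> ('a \<Rightarrow> real) set" where
  "nonneg_on S \<equiv> {\<phi>. \<forall>x\<in>S. 0 \<le> \<phi> x}"

abbreviation between_on :: "'a set \<Rightarrow> real \<Rightarrow> ('a \<Rightarrow> real) set" where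
  "between_on S a \<equiv> {\<phi>. \<forall>x\<in>S. \<phi> x \<in> {0..a}}"

lemma borel_measurable_Ham:
  assumes [measurable]: "\<And>x. (\<lambda>\<omega>. F \<omega> x) \<in> borel_measurable M"
  shows "(\<lambda>\<omega>. Ham L (F \<omega>)) \<in> borel_measurable M"
  unfolding Ham_eq_dirichlet dirichlet_def by measurable

lemma indicator_coordinatewise:
  assumes "finite S"
  shows "indicator {\<phi>. \<forall>x\<in>S. \<phi> x \<in> I} f = (\<Prod>x\<in>S. indicator I (f x) :: real)"
  using assms by (induction S rule: finite_induct) (auto simp: indicator_def)

lemma borel_measurable_indicator_coordinatewise:
  assumes [measurable]: "\<And>x. (\<lambda>\<omega>. F \<omega> x) \<in> borel_measurable M" "I \<in> sets borel"
    and "finite S"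
  shows "(\<lambda>\<omega>. indicator {\<phi>. \<forall>x\<in>S. \<phi> x \<in> I} (F \<omega>) :: real) \<in> borel_measurable M"
  unfolding indicator_coordinatewise[OF \<open>finite S\<close>] by measurable

lemma borel_measurable_indicator_nonneg_on:
  assumes "\<And>x. (\<lambda>\<omega>. F \<omega> x) \<in> borel_measurable M" and "finite S"
  shows "(\<lambda>\<omega>. indicator (nonneg_on S) (F \<omega>) :: real) \<in> borel_measurable M"
proof -
  have "nonneg_on S = {\<phi>. \<forall>x\<in>S. \<phi> x \<in> {0..}}"
    by auto
  then show ?thesis
    using borel_measurable_indicator_coordinatewise[of F M "{0..}" S] assms by simp
qed

lemma borel_measurable_zext: "(\<lambda>\<omega>. zext L \<omega> x) \<in> borel_measurable (Leb L)"
  unfolding zext_def by (cases "x \<in> L") auto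

lemma borel_measurable_glue: "(\<lambda>\<phi>. glue A B \<psi> \<phi> x) \<in> borel_measurable (Leb B)"
  unfolding glue_def by (cases "x \<in> A"; cases "x \<in> B") auto

lemma borel_measurable_Ham_zext [measurable]: "(\<lambda>\<omega>. Ham L (zext L \<omega>)) \<in> borel_measurable (Leb L)"
  by (rule borel_measurable_Ham[OF borel_measurable_zext])

lemma borel_measurable_Ham_glue [measurable]: "(\<lambda>\<phi>. Ham L (glue A B \<psi> \<phi>)) \<in> borel_measurable (Leb B)"
  by (rule borel_measurable_Ham[OF borel_measurable_glue])

lemma zext_merge:
  assumes "L = A \<union> B"
  shows "zext L (merge A B (\<psi>, \<phi>)) = glue A B \<psi> \<phi>"
  using assms by (auto simp: zext_def merge_def glue_def)

lemma emeasure_lborel_vimage_translation: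
  assumes "S \<in> sets borel"
  shows "emeasure lborel ((\<lambda>y::real. y + c) -` S) = emeasure lborel S"
proof -
  have "emeasure lborel S = emeasure (distr lborel borel ((+) c)) S"
    by (simp add: lborel_distr_plus)
  also have "\<dots> = emeasure lborel (((+) c) -` S \<inter> space lborel)"
    by (rule emeasure_distr) (auto simp: assms)
  also have "((+) c) -` S \<inter> space lborel = (\<lambda>y::real. y + c) -` S"
    by (auto simp: add.commute)
  finally show ?thesis ..
qed

lemma distr_Leb_translation:
  fixes B :: "'i set" and h :: "'i \<Rightarrow> real"
  assumes "finite B"
  shows "distr (Leb B) (Leb B) (\<lambda>\<eta>. \<lambda>x\<in>B. \<eta> x + h x) = Leb B"
proof -
  interpret product_sigma_finite "\<lambda>_::'i. lborel :: real measure"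
    by (simp add: product_sigma_finite_def sigma_finite_lborel)
  have T: "(\<lambda>\<eta>. \<lambda>x\<in>B. \<eta> x + h x) \<in> measurable (Leb B) (Leb B)"
    by (intro measurable_restrict) auto
  show ?thesis
  proof (rule PiM_eqI[OF \<open>finite B\<close>])
    fix S :: "'i \<Rightarrow> real set"
    assume S: "\<And>i. i \<in> B \<Longrightarrow> S i \<in> sets lborel"
    then have "PiE B S \<in> sets (Leb B)"
      using \<open>finite B\<close> by (auto intro: sets_PiM_I_finite)
    then have "emeasure (distr (Leb B) (Leb B) (\<lambda>\<eta>. \<lambda>x\<in>B. \<eta> x + h x)) (PiE B S)
       = emeasure (Leb B) ((\<lambda>\<eta>. \<lambda>x\<in>B. \<eta> x + h x) -` PiE B S \<inter> space (Leb B))"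
      by (rule emeasure_distr[OF T])
    also have "(\<lambda>\<eta>. \<lambda>x\<in>B. \<eta> x + h x) -` PiE B S \<inter> space (Leb B) = PiE B (\<lambda>i. (\<lambda>y. y + h i) -` S i)"
      by (auto simp: space_PiM PiE_iff)
    also have "emeasure (Leb B) (PiE B (\<lambda>i. (\<lambda>y. y + h i) -` S i))
        = (\<Prod>i\<in>B. emeasure lborel ((\<lambda>y. y + h i) -` S i))"
      using S \<open>finite B\<close> by (intro emeasure_PiM) (auto intro!: measurable_sets_borel[where M=borel])
    also have "\<dots> = (\<Prod>i\<in>B. emeasure lborel (S i))"
      using S by (intro prod.cong refl emeasure_lborel_vimage_translation) auto
    finally show "emeasure (distr (Leb B) (Leb B) (\<lambda>\<eta>. \<lambda>x\<in>B. \<eta> x + h x)) (PiE B S)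
       = (\<Prod>i\<in>B. emeasure lborel (S i))" .
  qed simp
qed

lemma nn_integral_Leb_translation:
  fixes B :: "'i set" and h :: "'i \<Rightarrow> real"
  assumes "finite B" and f: "f \<in> borel_measurable (Leb B)"
  shows "(\<integral>\<^sup>+\<phi>. f \<phi> \<partial>Leb B) = (\<integral>\<^sup>+\<eta>. f (\<lambda>x\<in>B. \<eta> x + h x) \<partial>Leb B)"
proof -
  have T: "(\<lambda>\<eta>. \<lambda>x\<in>B. \<eta> x + h x) \<in> measurable (Leb B) (Leb B)"
    by (intro measurable_restrict) auto
  have "(\<integral>\<^sup>+\<phi>. f \<phi> \<partial>Leb B) = (\<integral>\<^sup>+\<phi>. f \<phi> \<partial>distr (Leb B) (Leb B) (\<lambda>\<eta>. \<lambda>x\<in>B. \<eta> x + h x))"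
    by (simp add: distr_Leb_translation[OF \<open>finite B\<close>])
  also have "\<dots> = (\<integral>\<^sup>+\<eta>. f (\<lambda>x\<in>B. \<eta> x + h x) \<partial>Leb B)"
    by (rule nn_integral_distr[OF T]) (simp add: f)
  finally show ?thesis .
qed

section \<open>Conditioning on the field on a pinned set\<close>

lemma nn_integral_glue_translation:
  fixes A B L :: "(int^'d) set"
  assumes "finite L" and AB: "A \<inter> B = {}" "A \<union> B = L" and "\<forall>x\<in>A. 0 \<le> \<psi> x"
  obtains h C where "\<forall>x. 0 \<le> h x"
    and "\<And>G. G \<in> borel_measurable (Leb B) \<Longrightarrow>
      (\<integral>\<^sup>+\<phi>. ennreal (G \<phi> * exp (- Ham L (glue A B \<psi> \<phi>))) \<partial>Leb B)
        = ennreal (exp (- C)) * (\<integral>\<^sup>+\<eta>. ennreal (G (\<lambda>x\<in>B. \<eta> x + h x) * gibbs B \<eta>) \<partial>Leb B)"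
proof -
  obtain h C where "\<forall>x. 0 \<le> h x"
    and split: "\<And>\<eta>. Ham L (glue A B \<psi> (\<lambda>x. \<eta> x + h x)) = C + Ham B (zext B \<eta>)"
    using Ham_glue_split[OF assms] by blast
  have "finite B"
    using assms finite_subset by blast
  have "(\<integral>\<^sup>+\<phi>. ennreal (G \<phi> * exp (- Ham L (glue A B \<psi> \<phi>))) \<partial>Leb B)
      = ennreal (exp (- C)) * (\<integral>\<^sup>+\<eta>. ennreal (G (\<lambda>x\<in>B. \<eta> x + h x) * gibbs B \<eta>) \<partial>Leb B)"
    if [measurable]: "G \<in> borel_measurable (Leb B)" for G
  proof -
    have [measurable]: "(\<lambda>\<eta>. \<lambda>x\<in>B. \<eta> x + h x) \<in> measurable (Leb B) (Leb B)"
      by (intro measurable_restrict) auto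
    have "(\<integral>\<^sup>+\<phi>. ennreal (G \<phi> * exp (- Ham L (glue A B \<psi> \<phi>))) \<partial>Leb B)
        = (\<integral>\<^sup>+\<eta>. ennreal (G (\<lambda>x\<in>B. \<eta> x + h x) * exp (- Ham L (glue A B \<psi> (\<lambda>x\<in>B. \<eta> x + h x)))) \<partial>Leb B)"
      using \<open>finite B\<close> by (rule nn_integral_Leb_translation) measurable
    also have "\<dots> = (\<integral>\<^sup>+\<eta>. ennreal (exp (- C)) * ennreal (G (\<lambda>x\<in>B. \<eta> x + h x) * gibbs B \<eta>) \<partial>Leb B)"
    proof (rule nn_integral_cong)
      fix \<eta>
      have "glue A B \<psi> (\<lambda>x\<in>B. \<eta> x + h x) = glue A B \<psi> (\<lambda>x. \<eta> x + h x)"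
        by (auto simp: glue_def)
      then show "ennreal (G (\<lambda>x\<in>B. \<eta> x + h x) * exp (- Ham L (glue A B \<psi> (\<lambda>x\<in>B. \<eta> x + h x))))
          = ennreal (exp (- C)) * ennreal (G (\<lambda>x\<in>B. \<eta> x + h x) * gibbs B \<eta>)"
        by (simp add: split exp_diff exp_minus ennreal_mult'[symmetric] field_simps)
    qed
    also have "\<dots> = ennreal (exp (- C)) * (\<integral>\<^sup>+\<eta>. ennreal (G (\<lambda>x\<in>B. \<eta> x + h x) * gibbs B \<eta>) \<partial>Leb B)"
      by (intro nn_integral_cmult) measurable
    finally show ?thesis .
  qed
  with \<open>\<forall>x. 0 \<le> h x\<close> show thesis
    using that by blast
qed

text \<open>Under the shift by \<open>h \<ge> 0\<close>, positivity on \<open>B\<close> of the free field implies positivity on \<open>L\<close>.\<close>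

lemma nn_integral_glue_nonneg_on_ge:
  fixes A B L :: "(int^'d) set"
  assumes "finite L" and AB: "A \<inter> B = {}" "A \<union> B = L"
  shows "(\<integral>\<^sup>+\<phi>. ennreal (indicator (nonneg_on B) (zext B \<phi>) * gibbs B \<phi>) \<partial>Leb B) *
           (\<integral>\<^sup>+\<phi>. ennreal (indicator (between_on A a) (glue A B \<psi> \<phi>) * exp (- Ham L (glue A B \<psi> \<phi>))) \<partial>Leb B)
     \<le> (\<integral>\<^sup>+\<phi>. ennreal (gibbs B \<phi>) \<partial>Leb B) *
           (\<integral>\<^sup>+\<phi>. ennreal (indicator (nonneg_on L) (glue A B \<psi> \<phi>) * indicator (between_on A a) (glue A B \<psi> \<phi>)
              * exp (- Ham L (glue A B \<psi> \<phi>))) \<partial>Leb B)"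
    (is "?K1 * ?I2 \<le> ?K0 * ?I1")
proof (cases "\<psi> \<in> between_on A a")
  case False
  then have "indicator (between_on A a) (glue A B \<psi> \<phi>) = (0::real)" for \<phi>
    by (auto simp: glue_def indicator_def)
  then show ?thesis
    by simp
next
  case True
  then have between: "indicator (between_on A a) (glue A B \<psi> \<phi>) = (1::real)" for \<phi>
    by (auto simp: glue_def indicator_def)
  obtain h C where "\<forall>x. 0 \<le> h x"
    and translate: "\<And>G. G \<in> borel_measurable (Leb B) \<Longrightarrow>
      (\<integral>\<^sup>+\<phi>. ennreal (G \<phi> * exp (- Ham L (glue A B \<psi> \<phi>))) \<partial>Leb B)
        = ennreal (exp (- C)) * (\<integral>\<^sup>+\<eta>. ennreal (G (\<lambda>x\<in>B. \<eta> x + h x) * gibbs B \<eta>) \<partial>Leb B)"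
    using nn_integral_glue_translation[OF assms, of \<psi>] True by auto
  have I_between: "?I2 = ennreal (exp (- C)) * ?K0"
    using translate[of "\<lambda>_. 1"] unfolding between by simp
  have I_nonneg: "ennreal (exp (- C)) * ?K1 \<le> ?I1"
  proof -
    have nonneg: "indicator (nonneg_on B) (zext B \<eta>)
        \<le> (indicator (nonneg_on L) (glue A B \<psi> (\<lambda>x\<in>B. \<eta> x + h x)) :: real)" for \<eta>
      using True \<open>\<forall>x. 0 \<le> h x\<close> AB by (auto simp: indicator_def glue_def zext_def)
    have "ennreal (exp (- C)) * ?K1
        \<le> ennreal (exp (- C)) * (\<integral>\<^sup>+\<eta>. ennreal (indicator (nonneg_on L) (glue A B \<psi> (\<lambda>x\<in>B. \<eta> x + h x)) * gibbs B \<eta>) \<partial>Leb B)"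
      by (intro mult_left_mono nn_integral_mono ennreal_leI mult_right_mono nonneg) auto
    also have "\<dots> = (\<integral>\<^sup>+\<phi>. ennreal (indicator (nonneg_on L) (glue A B \<psi> \<phi>) * exp (- Ham L (glue A B \<psi> \<phi>))) \<partial>Leb B)"
      using \<open>finite L\<close> by (intro translate[symmetric] borel_measurable_indicator_nonneg_on borel_measurable_glue)
    finally show ?thesis
      unfolding between by simp
  qed
  have "?K1 * ?I2 = ?K0 * (ennreal (exp (- C)) * ?K1)"
    unfolding I_between by (simp add: mult_ac)
  also have "\<dots> \<le> ?K0 * ?I1"
    by (rule mult_left_mono[OF I_nonneg]) simp
  finally show ?thesis .
qed

lemma nn_integral_nonneg_on_between_ge:
  fixes A L :: "(int^'d) set"
  assumes "finite L" and "A \<subseteq> L"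
  defines "B \<equiv> L - A"
  shows "(\<integral>\<^sup>+\<phi>. ennreal (indicator (nonneg_on B) (zext B \<phi>) * gibbs B \<phi>) \<partial>Leb B) *
           (\<integral>\<^sup>+\<omega>. ennreal (indicator (between_on A a) (zext L \<omega>) * gibbs L \<omega>) \<partial>Leb L)
     \<le> (\<integral>\<^sup>+\<phi>. ennreal (gibbs B \<phi>) \<partial>Leb B) *
           (\<integral>\<^sup>+\<omega>. ennreal (indicator (nonneg_on L) (zext L \<omega>) * indicator (between_on A a) (zext L \<omega>)
              * gibbs L \<omega>) \<partial>Leb L)"
    (is "?K1 * integral\<^sup>N _ ?f2 \<le> ?K0 * integral\<^sup>N _ ?f1")
proof -
  have AB: "A \<inter> B = {}" "A \<union> B = L"
    using \<open>A \<subseteq> L\<close> by (auto simp: B_def)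
  have "finite A" "finite B"
    using \<open>finite L\<close> AB by (auto intro: finite_subset)
  interpret product_sigma_finite "\<lambda>_::int^'d. lborel :: real measure"
    by (simp add: product_sigma_finite_def sigma_finite_lborel)
  interpret PB: finite_product_sigma_finite "\<lambda>_::int^'d. lborel :: real measure" B
    by standard (rule \<open>finite B\<close>)
  have [measurable]: "(\<lambda>\<omega>. indicator (between_on A a) (zext L \<omega>) :: real) \<in> borel_measurable (Leb L)"
    using \<open>finite A\<close> by (intro borel_measurable_indicator_coordinatewise borel_measurable_zext) auto
  have [measurable]: "(\<lambda>\<omega>. indicator (nonneg_on L) (zext L \<omega>) :: real) \<in> borel_measurable (Leb L)"
    using \<open>finite L\<close> by (intro borel_measurable_indicator_nonneg_on borel_measurable_zext)
  have fubini: "integral\<^sup>N (Leb L) f = (\<integral>\<^sup>+\<psi>. (\<integral>\<^sup>+\<phi>. f (merge A B (\<psi>, \<phi>)) \<partial>Leb B) \<partial>Leb A)"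
    and inner_measurable: "(\<lambda>\<psi>. \<integral>\<^sup>+\<phi>. f (merge A B (\<psi>, \<phi>)) \<partial>Leb B) \<in> borel_measurable (Leb A)"
    if "f \<in> borel_measurable (Leb L)" for f
  proof -
    have f: "f \<in> borel_measurable (Leb (A \<union> B))"
      using that AB by simp
    show "integral\<^sup>N (Leb L) f = (\<integral>\<^sup>+\<psi>. (\<integral>\<^sup>+\<phi>. f (merge A B (\<psi>, \<phi>)) \<partial>Leb B) \<partial>Leb A)"
      using product_nn_integral_fold[OF AB(1) \<open>finite A\<close> \<open>finite B\<close> f] AB by simp
    have "(\<lambda>(\<psi>, \<phi>). f (merge A B (\<psi>, \<phi>))) \<in> borel_measurable (Leb A \<Otimes>\<^sub>M Leb B)"
      using measurable_comp[OF measurable_merge f] by (simp add: comp_def case_prod_beta')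
    then show "(\<lambda>\<psi>. \<integral>\<^sup>+\<phi>. f (merge A B (\<psi>, \<phi>)) \<partial>Leb B) \<in> borel_measurable (Leb A)"
      by (rule PB.borel_measurable_nn_integral)
  qed
  have "?K1 * integral\<^sup>N (Leb L) ?f2 = (\<integral>\<^sup>+\<psi>. ?K1 * (\<integral>\<^sup>+\<phi>. ?f2 (merge A B (\<psi>, \<phi>)) \<partial>Leb B) \<partial>Leb A)"
    by (subst fubini, measurable) (intro nn_integral_cmult[symmetric] inner_measurable, measurable)
  also have "\<dots> \<le> (\<integral>\<^sup>+\<psi>. ?K0 * (\<integral>\<^sup>+\<phi>. ?f1 (merge A B (\<psi>, \<phi>)) \<partial>Leb B) \<partial>Leb A)"
    using nn_integral_glue_nonneg_on_ge[OF \<open>finite L\<close> AB]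
    by (intro nn_integral_mono) (simp add: zext_merge[OF AB(2)[symmetric]])
  also have "\<dots> = ?K0 * integral\<^sup>N (Leb L) ?f1"
    by (subst fubini, measurable) (intro nn_integral_cmult inner_measurable, measurable)
  finally show ?thesis .
qed

lemma enn2real_cross_mult_le:
  fixes I1 I2 K0 K1 :: ennreal
  assumes "K1 * I2 \<le> K0 * I1" and "I1 \<noteq> \<infinity>"
  shows "enn2real I2 * (enn2real K1 / enn2real K0) \<le> enn2real I1"
proof (cases "K0 = \<infinity> \<or> K0 = 0")
  case False
  then have "enn2real (K1 * I2) \<le> enn2real (K0 * I1)"
    using assms by (intro enn2real_mono) (auto simp: ennreal_mult_less_top top.not_eq_extremum)
  moreover have "0 < enn2real K0"
    using False by (simp add: enn2real_positive_iff top.not_eq_extremum zero_less_iff_neq_zero)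
  ultimately show ?thesis
    by (simp add: enn2real_mult field_simps mult.commute)
qed auto

lemma integral_nonneg_on_between_ge:
  fixes A L :: "(int^'d) set"
  assumes "finite L" and "A \<subseteq> L" and "Zgff L \<noteq> 0"
  shows "(\<integral>\<omega>. indicator (between_on A a) (zext L \<omega>) * gibbs L \<omega> \<partial>Leb L) * Pgff (L - A) (nonneg_on (L - A))
     \<le> (\<integral>\<omega>. indicator (nonneg_on L) (zext L \<omega>) * indicator (between_on A a) (zext L \<omega>) * gibbs L \<omega> \<partial>Leb L)"
proof -
  define B where "B = L - A"
  have "finite A" "finite B"
    using assms by (auto simp: B_def intro: finite_subset)
  have between_L: "(\<lambda>\<omega>. indicator (between_on A a) (zext L \<omega>) :: real) \<in> borel_measurable (Leb L)"
    using \<open>finite A\<close> by (intro borel_measurable_indicator_coordinatewise borel_measurable_zext) auto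
  have nonneg_L: "(\<lambda>\<omega>. indicator (nonneg_on L) (zext L \<omega>) :: real) \<in> borel_measurable (Leb L)"
    using \<open>finite L\<close> by (intro borel_measurable_indicator_nonneg_on borel_measurable_zext)
  have nonneg_B: "(\<lambda>\<phi>. indicator (nonneg_on B) (zext B \<phi>) :: real) \<in> borel_measurable (Leb B)"
    using \<open>finite B\<close> by (intro borel_measurable_indicator_nonneg_on borel_measurable_zext)
  have gibbs: "(\<lambda>\<omega>. gibbs S \<omega>) \<in> borel_measurable (Leb S)" for S :: "(int^'d) set"
    by measurable
  have to_nn: "(\<integral>x. f x \<partial>M) = enn2real (\<integral>\<^sup>+x. ennreal (f x) \<partial>M)"
    if "f \<in> borel_measurable M" "\<And>x. 0 \<le> f x" for f :: "_ \<Rightarrow> real" and M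
    using that by (intro integral_eq_nn_integral) auto
  have weight_nonneg: "0 \<le> indicator S x * (r :: real)" if "0 \<le> r" for S x r
    using that by simp
  note measurability = borel_measurable_times between_L nonneg_L nonneg_B gibbs
  define I1 where "I1 = (\<integral>\<^sup>+\<omega>. ennreal (indicator (nonneg_on L) (zext L \<omega>) * indicator (between_on A a) (zext L \<omega>)
      * gibbs L \<omega>) \<partial>Leb L)"
  define I2 where "I2 = (\<integral>\<^sup>+\<omega>. ennreal (indicator (between_on A a) (zext L \<omega>) * gibbs L \<omega>) \<partial>Leb L)"
  define K0 where "K0 = (\<integral>\<^sup>+\<phi>. ennreal (gibbs B \<phi>) \<partial>Leb B)"
  define K1 where "K1 = (\<integral>\<^sup>+\<phi>. ennreal (indicator (nonneg_on B) (zext B \<phi>) * gibbs B \<phi>) \<partial>Leb B)"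
  have "Zgff L = enn2real (\<integral>\<^sup>+\<omega>. ennreal (gibbs L \<omega>) \<partial>Leb L)"
    unfolding Zgff_def by (rule to_nn) (intro gibbs exp_ge_zero)+
  then have "(\<integral>\<^sup>+\<omega>. ennreal (gibbs L \<omega>) \<partial>Leb L) \<noteq> \<infinity>"
    using \<open>Zgff L \<noteq> 0\<close> by auto
  moreover have "I1 \<le> (\<integral>\<^sup>+\<omega>. ennreal (gibbs L \<omega>) \<partial>Leb L)"
    unfolding I1_def by (intro nn_integral_mono ennreal_leI) (simp add: indicator_def)
  ultimately have "I1 \<noteq> \<infinity>"
    by (auto simp: top_unique)
  then have "enn2real I2 * (enn2real K1 / enn2real K0) \<le> enn2real I1"
    using nn_integral_nonneg_on_between_ge[OF assms(1,2)]
    unfolding I1_def I2_def K0_def K1_def B_def by (intro enn2real_cross_mult_le) (auto simp: mult.commute)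
  moreover have "Pgff B (nonneg_on B) = enn2real K1 / enn2real K0"
    unfolding Pgff_def Zgff_def K0_def K1_def
    by (subst (1 2) to_nn) (intro measurability weight_nonneg exp_ge_zero refl)+
  moreover have "(\<integral>\<omega>. indicator (between_on A a) (zext L \<omega>) * gibbs L \<omega> \<partial>Leb L) = enn2real I2"
    unfolding I2_def by (rule to_nn) (intro measurability weight_nonneg exp_ge_zero)+
  moreover have "(\<integral>\<omega>. indicator (nonneg_on L) (zext L \<omega>) * indicator (between_on A a) (zext L \<omega>) * gibbs L \<omega> \<partial>Leb L)
      = enn2real I1"
    unfolding I1_def by (rule to_nn) (intro measurability weight_nonneg mult_nonneg_nonneg indicator_pos_le exp_ge_zero)+
  ultimately show ?thesis
    unfolding B_def by simp
qed

lemma Pgff_nonneg: "0 \<le> Pgff B E"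
  unfolding Pgff_def Zgff_def by (intro divide_nonneg_nonneg integral_nonneg_AE) auto

lemma Pgff_nonneg_on_between_ge:
  fixes A L :: "(int^'d) set"
  assumes "finite L" and "A \<subseteq> L"
  shows "Pgff L (between_on A a) * Pgff (L - A) (nonneg_on (L - A)) \<le> Pgff L (nonneg_on L \<inter> between_on A a)"
proof (cases "Zgff L = 0")
  case False
  have "0 \<le> Zgff L"
    unfolding Zgff_def by (rule integral_nonneg_AE) auto
  have "Pgff L (between_on A a) * Pgff (L - A) (nonneg_on (L - A))
      = (\<integral>\<omega>. indicator (between_on A a) (zext L \<omega>) * gibbs L \<omega> \<partial>Leb L) * Pgff (L - A) (nonneg_on (L - A)) / Zgff L"
    by (simp add: Pgff_def[of L])
  also have "\<dots> \<le> (\<integral>\<omega>. indicator (nonneg_on L) (zext L \<omega>) * indicator (between_on A a) (zext L \<omega>) * gibbs L \<omega> \<partial>Leb L) / Zgff L"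
    using integral_nonneg_on_between_ge[OF assms False] \<open>0 \<le> Zgff L\<close> by (rule divide_right_mono)
  also have "\<dots> = Pgff L (nonneg_on L \<inter> between_on A a)"
    by (simp add: Pgff_def[of L] indicator_inter_arith)
  finally show ?thesis .
qed (simp add: Pgff_def)

lemma pow_mult_Pgff_nonneg_on_le:
  fixes A L :: "(int^'d) set" and q m :: real
  assumes "finite L" and "A \<subseteq> L" and "0 \<le> q" and "m ^ card A \<le> Pgff L (between_on A a)"
  shows "(q * m) ^ card A * Pgff (L - A) (nonneg_on (L - A)) \<le> q ^ card A * Pgff L (nonneg_on L \<inter> between_on A a)"
proof -
  have "(q * m) ^ card A * Pgff (L - A) (nonneg_on (L - A)) = q ^ card A * (m ^ card A * Pgff (L - A) (nonneg_on (L - A)))"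
    by (simp add: power_mult_distrib)
  also have "\<dots> \<le> q ^ card A * (Pgff L (between_on A a) * Pgff (L - A) (nonneg_on (L - A)))"
    using assms Pgff_nonneg by (intro mult_left_mono mult_right_mono) auto
  also have "\<dots> \<le> q ^ card A * Pgff L (nonneg_on L \<inter> between_on A a)"
    using Pgff_nonneg_on_between_ge[OF assms(1,2)] assms(3) by (intro mult_left_mono) auto
  finally show ?thesis .
qed

section \<open>Expansion of the pinning reward\<close>

lemma exp_mult_card_eq_sum_Pow:
  fixes L :: "'i set" and f :: "'i \<Rightarrow> real"
  assumes "finite L"
  shows "exp (b * real (card {x\<in>L. f x \<in> {0..a}}))
    = (\<Sum>A\<in>Pow L. (exp b - 1) ^ card A * indicator (between_on A a) f)"
proof -
  define S where "S = {x\<in>L. f x \<in> {0..a}}"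
  have "finite S"
    using assms by (simp add: S_def)
  have "exp (b * real (card S)) = (exp b - 1 + 1) ^ card S"
    by (simp add: exp_of_nat_mult[symmetric] mult.commute)
  also have "\<dots> = (\<Sum>A\<in>Pow S. (exp b - 1) ^ card A)"
    using prod_add[of S "\<lambda>_. exp b - 1" "\<lambda>_. 1"] \<open>finite S\<close> by simp
  also have "\<dots> = (\<Sum>A\<in>Pow L. if A \<subseteq> S then (exp b - 1) ^ card A else 0)"
    using assms by (intro sum.mono_neutral_cong_left) (auto simp: S_def)
  also have "\<dots> = (\<Sum>A\<in>Pow L. (exp b - 1) ^ card A * indicator (between_on A a) f)"
    by (rule sum.cong) (auto simp: S_def indicator_def)
  finally show ?thesis
    unfolding S_def .
qed

lemma Ptil_eq_sum_Pow:
  fixes E :: "(int^'d \<Rightarrow> real) set"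
  assumes "Zgff (Lam N :: (int^'d) set) \<noteq> 0"
    and [measurable]: "(\<lambda>\<omega>. indicator E (zext (Lam N) \<omega>) :: real) \<in> borel_measurable (Leb (Lam N :: (int^'d) set))"
  shows "Ptil N a b E = Zgff (Lam N :: (int^'d) set) *
      (\<Sum>A\<in>Pow (Lam N). (exp b - 1) ^ card A * Pgff (Lam N) (E \<inter> between_on A a)) / Ztil N a b TYPE('d)"
proof -
  define L where "L = (Lam N :: (int^'d) set)"
  have "finite L"
    by (simp add: L_def finite_Lam)
  have gibbs_integrable: "integrable (Leb L) (gibbs L)"
    using assms(1) not_integrable_integral_eq unfolding Zgff_def L_def by blast
  have integrable: "integrable (Leb L) (\<lambda>\<omega>. indicator E (zext L \<omega>) * indicator (between_on A a) (zext L \<omega>) * gibbs L \<omega>)"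
    if "A \<subseteq> L" for A
  proof (rule Bochner_Integration.integrable_bound[OF gibbs_integrable])
    have "finite A"
      using \<open>finite L\<close> that by (rule finite_subset[rotated])
    then show "(\<lambda>\<omega>. indicator E (zext L \<omega>) * indicator (between_on A a) (zext L \<omega>) * gibbs L \<omega>) \<in> borel_measurable (Leb L)"
      using borel_measurable_indicator_coordinatewise[OF borel_measurable_zext, of "{0..a}" A L]
      unfolding L_def by measurable
  qed (auto simp: indicator_def)
  have "(\<integral>\<omega>. indicator E (zext L \<omega>) * exp (- Ham L (zext L \<omega>) + b * real (card {x \<in> L. zext L \<omega> x \<in> {0..a}})) \<partial>Leb L)
      = (\<integral>\<omega>. (\<Sum>A\<in>Pow L. (exp b - 1) ^ card A * (indicator E (zext L \<omega>) * indicator (between_on A a) (zext L \<omega>) * gibbs L \<omega>)) \<partial>Leb L)"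
    unfolding exp_add exp_mult_card_eq_sum_Pow[OF \<open>finite L\<close>]
    by (simp add: sum_distrib_left sum_distrib_right mult_ac)
  also have "\<dots> = (\<Sum>A\<in>Pow L. (exp b - 1) ^ card A *
      (\<integral>\<omega>. indicator E (zext L \<omega>) * indicator (between_on A a) (zext L \<omega>) * gibbs L \<omega> \<partial>Leb L))"
    using integrable by (subst Bochner_Integration.integral_sum) auto
  also have "\<dots> = Zgff L * (\<Sum>A\<in>Pow L. (exp b - 1) ^ card A * Pgff L (E \<inter> between_on A a))"
    using assms(1) unfolding sum_distrib_left Pgff_def indicator_inter_arith L_def by (simp add: mult_ac)
  finally show ?thesis
    unfolding Ptil_def L_def by simp
qed

theorem mainTheorem4:
  fixes a b c :: real and N :: nat
  assumes "CARD('d::finite) \<ge> 3" and "a > 0" and "b > 0" and "c > 0"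
    and hc: "\<And>M A. A \<subseteq> (Lam M :: (int^'d) set) \<Longrightarrow>
        Pgff (Lam M) {\<phi>. \<forall>x\<in>A. \<phi> x \<in> {0..a}} \<ge> (c * min (1/2) a) ^ card A"
  shows "Ptil N a b {\<phi>. \<forall>x\<in>(Lam N :: (int^'d) set). \<phi> x \<ge> 0} \<ge>
     Zgff (Lam N :: (int^'d) set) / Ztil N a b TYPE('d) *
     (\<Sum>A\<in>Pow (Lam N :: (int^'d) set).
        exp ((ln (exp b - 1) + ln c + ln (min (1/2) a)) * real (card A)) *
        Pgff (Lam N - A) {\<phi>. \<forall>x\<in>Lam N - A. \<phi> x \<ge> 0})"
proof -
  define L where "L = (Lam N :: (int^'d) set)"
  define q where "q = exp b - 1"
  define m where "m = c * min (1/2) a"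
  have "finite L" "0 < q" "0 < m"
    using assms by (simp_all add: L_def finite_Lam q_def m_def)
  have "Zgff L \<noteq> 0"
    using hc[of "{}" N] by (auto simp: Pgff_def L_def)
  have "0 \<le> Zgff L / Ztil N a b TYPE('d)"
    unfolding Zgff_def Ztil_def by (intro divide_nonneg_nonneg integral_nonneg_AE) auto
  have "ln (exp b - 1) + ln c + ln (min (1/2) a) = ln (q * m)"
    using assms \<open>0 < q\<close> by (simp add: ln_mult q_def m_def)
  then have exp_eq: "exp ((ln (exp b - 1) + ln c + ln (min (1/2) a)) * real (card A)) = (q * m) ^ card A" for A
    using \<open>0 < q\<close> \<open>0 < m\<close> by (simp add: mult.commute[of _ "real (card A)"] exp_of_nat_mult)
  have "Zgff L / Ztil N a b TYPE('d) * (\<Sum>A\<in>Pow L. (q * m) ^ card A * Pgff (L - A) (nonneg_on (L - A)))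
    \<le> Zgff L / Ztil N a b TYPE('d) * (\<Sum>A\<in>Pow L. q ^ card A * Pgff L (nonneg_on L \<inter> between_on A a))"
    using \<open>0 \<le> Zgff L / Ztil N a b TYPE('d)\<close> \<open>finite L\<close> \<open>0 < q\<close> hc[of _ N]
    by (intro mult_left_mono sum_mono pow_mult_Pgff_nonneg_on_le) (auto simp: L_def m_def)
  also have "\<dots> = Ptil N a b (nonneg_on L)"
  proof -
    have "(\<lambda>\<omega>. indicator (nonneg_on L) (zext L \<omega>) :: real) \<in> borel_measurable (Leb L)"
      using \<open>finite L\<close> by (intro borel_measurable_indicator_nonneg_on borel_measurable_zext)
    then show ?thesis
      using Ptil_eq_sum_Pow[of N "nonneg_on L" a b] \<open>Zgff L \<noteq> 0\<close> unfolding L_def q_def by simp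
  qed
  finally show ?thesis
    unfolding L_def exp_eq .
qed

end
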